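(* Let $n\ge 2$, let $c_k$ be a chain over $[n]$ with $1\le k\le n-1$, and let $p,q$ be distinct propositional letters. Then none of the following is derivable in $\mathbf{CPN}_n$: (i) $\neg_{c_k}p\to_{(n)}(p\to_{(n)}q)$; (ii) $(\neg_{c_k}p\to_{(n)}\neg_{c_k}q)\to_{(n)}(q\to_{(n)}p)$; (iii) $(p\to_{(n)}q)\to_{(n)}(\neg_{c_k}q\to_{(n)}\neg_{c_k}p)$; (iv) $(p\vee_{(n)}q)\wedge_{(n)}\neg_{c_k}p\to_{(n)}q$; (v) $(p\to_{(n)}q)\wedge_{(n)}\neg_{c_k}q\to_{(n)}\neg_{c_k}p$; (vi) $\neg_{c_k}p\to_{(n)}\neg_{c_k}(p\wedge_{(n)}q)$; (vii) $\neg_{c_k}p\vee_{(n)}\neg_{c_k}q\to_{(n)}\neg_{c_k}(p\wedge_{(n)}q)$; (viii) $\neg_{c_k}(p\vee_{(n)}q)\to_{(n)}\neg_{c_k}p\wedge_{(n)}\neg_{c_k}q$.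
   Context: Fix $n\in\mathbb{N}$, $n\ge 1$, and write $[n]=\{1,\dots,n\}$. Chains: a chain over $[n]$ is a finite sequence of distinct elements of $[n]$; chains with the same length and the same symbols are identified, so a chain is effectively a subset of $[n]$. $c_k$ denotes a chain with $k$ symbols, $\epsilon$ the empty chain, and $(n)$ the chain consisting of all symbols of $[n]$. For chains $c,d$: the concatenation $c\cdot d$ is the chain of symbols occurring in $c$ or in $d$; the coconcatenation $c\otimes d$ is the chain of symbols occurring in exactly one of $c,d$; $d$ is a subchain of $c$ if every symbol of $d$ is a symbol of $c$. The complementary chain $c'_{n-k}$ of $c_k$ is the chain of the symbols of $[n]$ not occurring in $c_k$. Language of $\mathbf{CPN}_n$: a countable set $P_n$ of propositional letters; constants $\perp_c$ for each chain $c$ over $[n]$ with $1\le |c|\le n-1$, and constants $\perp_{(n)}$ (contradiction) and $\top_{(n)}$ (truth); a unary connective $\neg_c$ for each nonempty chain $c$ over $[n]$ ($\neg_{(n)}$ is the strong negation; the $\neg_c$ with $|c|\le n-1$ are weak negations); a binary connective $\to_{(n)}$. Formulas: propositional letters and constants are formulas; if $\varphi,\psi$ are formulas then so are $\neg_c\varphi$ and $(\varphi\to_{(n)}\psi)$. Conventions: $\neg_\epsilon\varphi:=\varphi$, $\perp_\epsilon:=\top_{(n)}$, and $\perp_c$ for $c=(n)$ means $\perp_{(n)}$. Abbreviations: $\varphi\wedge_{(n)}\psi:=\neg_{(n)}(\varphi\to_{(n)}\neg_{(n)}\psi)$, $\varphi\vee_{(n)}\psi:=\neg_{(n)}\varphi\to_{(n)}\psi$,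 $\varphi\leftrightarrow_{(n)}\psi:=(\varphi\to_{(n)}\psi)\wedge_{(n)}(\psi\to_{(n)}\varphi)$. Axioms of $\mathbf{CPN}_n$, for all formulas $\varphi,\psi,\chi$ and all nonempty chains $c_k,c_r$ over $[n]$: (A1) $\varphi\to_{(n)}(\psi\to_{(n)}\varphi)$; (A2) $(\varphi\to_{(n)}(\psi\to_{(n)}\chi))\to_{(n)}((\varphi\to_{(n)}\psi)\to_{(n)}(\varphi\to_{(n)}\chi))$; (A3) $(\neg_{(n)}\psi\to_{(n)}\neg_{(n)}\varphi)\to_{(n)}((\neg_{(n)}\psi\to_{(n)}\varphi)\to_{(n)}\psi)$; (A4) $\varphi\to_{(n)}(\perp_{c_k}\to_{(n)}\neg_{c_k}\varphi)$; (A5) $\neg_{c_k}\neg_{c_r}\varphi\leftrightarrow_{(n)}\neg_{c_k\otimes c_r}\varphi$; (A6) $\neg_{c_k}\perp_{c_r}\leftrightarrow_{(n)}\perp_{c_k\otimes c_r}$; (A7) $\perp_{c_k}\to_{(n)}\perp_{c_r}$, whenever $c_r$ is a subchain of $c_k$. The only rule of inference is modus ponens (from $\varphi$ and $\varphi\to_{(n)}\psi$ infer $\psi$). For a set $\Sigma$ of formulas, $\Sigma\vdash_{(n)}\varphi$ means there is a finite sequence of formulas ending with $\varphi$, each of which is an axiom, a member of $\Sigma$, or obtained from two earlier members by modus ponens; $\vdash_{(n)}\varphi$ means $\emptyset\vdash_{(n)}\varphi$. *)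

theory Defs
  imports Main
begin

text \<open>Chains over [n] are represented as finite sets of symbols (chains with the same
symbols are identified). Propositional letters are indexed by nat (countably many).\<close>

datatype fm =
    Var nat
  | Bot "nat set"           \<comment> \<open>\<bottom>_c for a nonempty chain c; Bot {1..n} is \<bottom>_(n)\<close>
  | Top
  | Neg "nat set" fm
  | Imp fm fm

definition chain :: "nat \<Rightarrow> nat set \<Rightarrow> bool" where
  "chain n c \<longleftrightarrow> c \<subseteq> {1..n}"

definition nechain :: "nat \<Rightarrow> nat set \<Rightarrow> bool" where
  "nechain n c \<longleftrightarrow> chain n c \<and> c \<noteq> {}"

fun wf :: "nat \<Rightarrow> fm \<Rightarrow> bool" where
  "wf n (Var p) = True"
| "wf n (Bot c) = nechain n c"
| "wf n Top = True"
| "wf n (Neg c \<phi>) = (nechain n c \<and> wf n \<phi>)"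
| "wf n (Imp \<phi> \<psi>) = (wf n \<phi> \<and> wf n \<psi>)"

definition cocat :: "nat set \<Rightarrow> nat set \<Rightarrow> nat set" where
  "cocat c d = (c - d) \<union> (d - c)"

text \<open>Conventions: \<not>_\<epsilon> \<phi> = \<phi>, \<bottom>_\<epsilon> = \<top>_(n).\<close>
definition negc :: "nat set \<Rightarrow> fm \<Rightarrow> fm" where
  "negc c \<phi> = (if c = {} then \<phi> else Neg c \<phi>)"

definition botc :: "nat set \<Rightarrow> fm" where
  "botc c = (if c = {} then Top else Bot c)"

definition SNeg :: "nat \<Rightarrow> fm \<Rightarrow> fm" where
  "SNeg n \<phi> = Neg {1..n} \<phi>"

definition And :: "nat \<Rightarrow> fm \<Rightarrow> fm \<Rightarrow> fm" where
  "And n \<phi> \<psi> = SNeg n (Imp \<phi> (SNeg n \<psi>))"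

definition Or :: "nat \<Rightarrow> fm \<Rightarrow> fm \<Rightarrow> fm" where
  "Or n \<phi> \<psi> = Imp (SNeg n \<phi>) \<psi>"

definition Iff :: "nat \<Rightarrow> fm \<Rightarrow> fm \<Rightarrow> fm" where
  "Iff n \<phi> \<psi> = And n (Imp \<phi> \<psi>) (Imp \<psi> \<phi>)"

inductive axiom :: "nat \<Rightarrow> fm \<Rightarrow> bool" for n where
  A1: "\<lbrakk>wf n \<phi>; wf n \<psi>\<rbrakk> \<Longrightarrow> axiom n (Imp \<phi> (Imp \<psi> \<phi>))"
| A2: "\<lbrakk>wf n \<phi>; wf n \<psi>; wf n \<chi>\<rbrakk> \<Longrightarrow>
        axiom n (Imp (Imp \<phi> (Imp \<psi> \<chi>)) (Imp (Imp \<phi> \<psi>) (Imp \<phi> \<chi>)))"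
| A3: "\<lbrakk>wf n \<phi>; wf n \<psi>\<rbrakk> \<Longrightarrow>
        axiom n (Imp (Imp (SNeg n \<psi>) (SNeg n \<phi>)) (Imp (Imp (SNeg n \<psi>) \<phi>) \<psi>))"
| A4: "\<lbrakk>wf n \<phi>; nechain n ck\<rbrakk> \<Longrightarrow> axiom n (Imp \<phi> (Imp (Bot ck) (Neg ck \<phi>)))"
| A5: "\<lbrakk>wf n \<phi>; nechain n ck; nechain n cr\<rbrakk> \<Longrightarrow>
        axiom n (Iff n (Neg ck (Neg cr \<phi>)) (negc (cocat ck cr) \<phi>))"
| A6: "\<lbrakk>nechain n ck; nechain n cr\<rbrakk> \<Longrightarrow>
        axiom n (Iff n (Neg ck (Bot cr)) (botc (cocat ck cr)))"
| A7: "\<lbrakk>nechain n ck; nechain n cr; cr \<subseteq> ck\<rbrakk> \<Longrightarrow> axiom n (Imp (Bot ck) (Bot cr))"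

inductive deriv :: "nat \<Rightarrow> fm set \<Rightarrow> fm \<Rightarrow> bool" for n \<Sigma> where
  ax: "axiom n \<phi> \<Longrightarrow> deriv n \<Sigma> \<phi>"
| hyp: "\<phi> \<in> \<Sigma> \<Longrightarrow> deriv n \<Sigma> \<phi>"
| mp: "\<lbrakk>deriv n \<Sigma> \<phi>; deriv n \<Sigma> (Imp \<phi> \<psi>)\<rbrakk> \<Longrightarrow> deriv n \<Sigma> \<psi>"

end

theory Submission
  imports Defs
begin

text \<open>The matrix semantics of \<open>CPN\<^sub>n\<close> assigns to a formula a subset of \<open>[n]\<close>; looking at a single
coordinate \<open>i \<in> [n]\<close> gives a two-valued semantics in which \<open>\<not>\<^sub>c\<close> is classical negation if
\<open>i \<in> c\<close> and the identity otherwise, and \<open>\<bottom>\<^sub>c\<close> is false iff \<open>i \<in> c\<close>. Every axiom is valid at every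
coordinate, hence so is every theorem. Choosing \<open>i \<notin> c\<close>, the weak negation \<open>\<not>\<^sub>c\<close> disappears and
each of the eight formulas becomes a classical non-tautology in \<open>p, q\<close>.\<close>

fun holds_at :: "nat \<Rightarrow> (nat \<Rightarrow> bool) \<Rightarrow> fm \<Rightarrow> bool" where
  "holds_at i v (Var p) = v p"
| "holds_at i v (Bot c) = (i \<notin> c)"
| "holds_at i v Top = True"
| "holds_at i v (Neg c \<phi>) = (holds_at i v \<phi> \<noteq> (i \<in> c))"
| "holds_at i v (Imp \<phi> \<psi>) = (holds_at i v \<phi> \<longrightarrow> holds_at i v \<psi>)"

lemma holds_at_SNeg [simp]:
  "i \<in> {1..n} \<Longrightarrow> holds_at i v (SNeg n \<phi>) = (\<not> holds_at i v \<phi>)"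
  by (simp add: SNeg_def)

lemma holds_at_And [simp]:
  "i \<in> {1..n} \<Longrightarrow> holds_at i v (And n \<phi> \<psi>) = (holds_at i v \<phi> \<and> holds_at i v \<psi>)"
  by (simp add: And_def)

lemma holds_at_Or [simp]:
  "i \<in> {1..n} \<Longrightarrow> holds_at i v (Or n \<phi> \<psi>) = (holds_at i v \<phi> \<or> holds_at i v \<psi>)"
  by (auto simp: Or_def)

lemma holds_at_Iff [simp]:
  "i \<in> {1..n} \<Longrightarrow> holds_at i v (Iff n \<phi> \<psi>) = (holds_at i v \<phi> \<longleftrightarrow> holds_at i v \<psi>)"
  by (auto simp: Iff_def)

lemma holds_at_axiom: "axiom n \<phi> \<Longrightarrow> i \<in> {1..n} \<Longrightarrow> holds_at i v \<phi>"
proof (induction rule: axiom.induct)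
  case (A5 \<phi> ck cr)
  then show ?case by (auto simp: negc_def cocat_def)
next
  case (A6 ck cr)
  then show ?case by (auto simp: botc_def cocat_def)
qed auto

lemma holds_at_deriv:
  assumes "deriv n \<Sigma> \<phi>" and "i \<in> {1..n}" and "\<forall>\<sigma>\<in>\<Sigma>. holds_at i v \<sigma>"
  shows "holds_at i v \<phi>"
  using assms by (induction rule: deriv.induct) (auto simp: holds_at_axiom)

lemma not_deriv_if_falsified_at:
  "i \<in> {1..n} \<Longrightarrow> \<not> holds_at i v \<phi> \<Longrightarrow> \<not> deriv n {} \<phi>"
  using holds_at_deriv by blast

lemma chain_card_less_obtains_outside:
  assumes "chain n c" and "card c < n"
  obtains i where "i \<in> {1..n}" and "i \<notin> c"
proof -
  have "\<not> {1..n} \<subseteq> c"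
  proof
    assume "{1..n} \<subseteq> c"
    then have "n \<le> card c"
      using assms(1) card_mono[of c "{1..n}"] by (simp add: chain_def subset_antisym)
    then show False using assms(2) by simp
  qed
  then show ?thesis using that by blast
qed

theorem mainTheorem12:
  fixes n :: nat and c :: "nat set" and p q :: nat
  assumes "n \<ge> 2" and "chain n c" and "1 \<le> card c" and "card c \<le> n - 1" and "p \<noteq> q"
  shows "\<not> deriv n {} (Imp (Neg c (Var p)) (Imp (Var p) (Var q)))
       \<and> \<not> deriv n {} (Imp (Imp (Neg c (Var p)) (Neg c (Var q))) (Imp (Var q) (Var p)))
       \<and> \<not> deriv n {} (Imp (Imp (Var p) (Var q)) (Imp (Neg c (Var q)) (Neg c (Var p))))
       \<and> \<not> deriv n {} (Imp (And n (Or n (Var p) (Var q)) (Neg c (Var p))) (Var q))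
       \<and> \<not> deriv n {} (Imp (And n (Imp (Var p) (Var q)) (Neg c (Var q))) (Neg c (Var p)))
       \<and> \<not> deriv n {} (Imp (Neg c (Var p)) (Neg c (And n (Var p) (Var q))))
       \<and> \<not> deriv n {} (Imp (Or n (Neg c (Var p)) (Neg c (Var q))) (Neg c (And n (Var p) (Var q))))
       \<and> \<not> deriv n {} (Imp (Neg c (Or n (Var p) (Var q))) (And n (Neg c (Var p)) (Neg c (Var q))))"
proof -
  obtain i where i: "i \<in> {1..n}" "i \<notin> c"
    using chain_card_less_obtains_outside[OF assms(2)] assms(1,4) by force
  have refuted: "\<not> deriv n {} \<phi>"
    if "\<not> holds_at i (\<lambda>r. r = p) \<phi> \<or> \<not> holds_at i (\<lambda>r. r \<noteq> p) \<phi>" for \<phi>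
    using that not_deriv_if_falsified_at[OF i(1)] by blast
  show ?thesis
    by (intro conjI; rule refuted) (use i assms(5) in simp_all)
qed

end
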